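(* Let $\mathbb{X}$ be a measurable space, $\kappa(\mathrm{d}x\mid x')$ a Markov transition kernel on $\mathbb{X}$ with invariant (target) probability distribution $\pi(\mathrm{d}x)$, and $\tau(\mathrm{d}h\mid x)$ a family of probability distributions on $(0,\infty)$ (the hold-time distributions), with cdf $F_{\tau}(h\mid x)$ and survival function $\bar F_{\tau}(h\mid x)=1-F_{\tau}(h\mid x)$. Assume: (1) there is $\epsilon>0$ such that $H>\epsilon$ almost surely under every $\tau(\cdot\mid x)$; (2) $\sup_{x\in\mathbb{X}}\mathbb{E}_{\tau}[H\mid x]<\infty$; (3) $\tau$ is homogeneous in time. Suppose there is a joint kernel $\kappa(\mathrm{d}x_n,\mathrm{d}h_{n-1}\mid x_{n-1})=\kappa(\mathrm{d}x_n\mid h_{n-1},x_{n-1})\,\tau(\mathrm{d}h_{n-1}\mid x_{n-1})$ whose $x_n$-marginal is $\kappa(\mathrm{d}x_n\mid x_{n-1})$, and let $(X_n,H_{n-1})_{n\ge1}$ be generated by this joint kernel from $X_0$ (so $H_{n-1}$ is the real time taken to compute the transition from $X_{n-1}$ to $X_n$). Define arrival times $A_0=0$, $A_n=\sum_{i=0}^{n-1}H_i$ for $n\ge1$, the counting process $N(t)=\sup\{n: A_n\le t\}$, and the continuous-time process $X(t)=X_{N(t)}$, $L(t)=t-A_{N(t)}$ (the lag since the last jump). Then the Markov jump process $(X,L)(t)$ has stationary distribution \[ \alpha(\mathrm{d}x,\mathrm{d}l)=\frac{\bar F_{\tau}(l\mid x)}{\mathbb{E}_{\tau}[H]}\,\pi(\mathrm{d}x)\,\mathrm{d}l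 ,\qquad x\in\mathbb{X},\ l\ge 0, \] where $\mathbb{E}_{\tau}[H]=\int_{\mathbb{X}}\mathbb{E}_{\tau}[H\mid x]\,\pi(\mathrm{d}x)$.
   Context: $\mathbb{E}_{\tau}[H\mid x]$ denotes the mean of $\tau(\cdot\mid x)$. The kernel $\kappa$ need not have a density; nothing is assumed about $\tau$ beyond (1)–(3) (in particular it need not be memoryless). The distribution $\alpha$ is called the anytime distribution. *)

theory Defs
  imports "HOL-Probability.Probability"
begin

text \<open>Hold-time kernel tau :: 'a => real measure; conditional transition kernel
  kc x h = kappa(dx' | h, x).  Time-homogeneity of tau is built in: tau does not depend on n.\<close>

text \<open>fresh_part tau kc n x s A: probability that the process started afresh at state x
  (lag 0, i.e. a jump has just happened) has made exactly n jumps by time s and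
  (X(s), L(s)) lies in A.  The jump at time exactly s counts (N(t) = sup {n. A_n <= t}).\<close>
primrec fresh_part ::
  "('a \<Rightarrow> real measure) \<Rightarrow> ('a \<Rightarrow> real \<Rightarrow> 'a measure) \<Rightarrow> nat \<Rightarrow> 'a \<Rightarrow> real \<Rightarrow> ('a \<times> real) set \<Rightarrow> ennreal"
where
  "fresh_part \<tau> kc 0 x s A = emeasure (\<tau> x) {s<..} * indicator A (x, s)"
| "fresh_part \<tau> kc (Suc n) x s A =
     (\<integral>\<^sup>+ h. indicator {..s} h * (\<integral>\<^sup>+ x'. fresh_part \<tau> kc n x' (s - h) A \<partial>kc x h) \<partial>\<tau> x)"

definition fresh_law ::
  "('a \<Rightarrow> real measure) \<Rightarrow> ('a \<Rightarrow> real \<Rightarrow> 'a measure) \<Rightarrow> 'a \<Rightarrow> real \<Rightarrow> ('a \<times> real) set \<Rightarrow> ennreal"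
where
  "fresh_law \<tau> kc x s A = (\<Sum>n. fresh_part \<tau> kc n x s A)"

text \<open>Transition probability of the Markov jump process (X,L): from state (x,l), the law of
  (X(t),L(t)) in A.  The current hold time H has law tau(.|x) conditioned on H > l; if
  H - l > t no jump has happened yet, otherwise the chain jumps at time H - l to
  x' ~ kc x H and then restarts afresh.\<close>
definition trans_XL ::
  "('a \<Rightarrow> real measure) \<Rightarrow> ('a \<Rightarrow> real \<Rightarrow> 'a measure) \<Rightarrow> real \<Rightarrow> 'a \<Rightarrow> real \<Rightarrow> ('a \<times> real) set \<Rightarrow> ennreal"
where
  "trans_XL \<tau> kc t x l A =
     (\<integral>\<^sup>+ h. indicator {l<..} h *
        (if t < h - l then indicator A (x, l + t)
         else \<integral>\<^sup>+ x'. fresh_law \<tau> kc x' (t - (h - l)) A \<partial>kc x h) \<partial>\<tau> x)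
     / emeasure (\<tau> x) {l<..}"

definition mean_hold :: "('a \<Rightarrow> real measure) \<Rightarrow> 'a \<Rightarrow> real" where
  "mean_hold \<tau> x = (\<integral> h. h \<partial>\<tau> x)"

definition mean_hold_total :: "'a measure \<Rightarrow> ('a \<Rightarrow> real measure) \<Rightarrow> real" where
  "mean_hold_total \<pi> \<tau> = (\<integral> x. mean_hold \<tau> x \<partial>\<pi>)"

definition anytime_dist :: "'a measure \<Rightarrow> ('a \<Rightarrow> real measure) \<Rightarrow> ('a \<times> real) measure" where
  "anytime_dist \<pi> \<tau> = density (\<pi> \<Otimes>\<^sub>M lborel)
     (\<lambda>(x, l). ennreal (indicator {0..} l * measure (\<tau> x) {l<..} / mean_hold_total \<pi> \<tau>))"

end

theory Submission
  imports Defs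
begin

text \<open>
  Unnormalised, the anytime distribution is pi(dx) Fbar(l|x) dl on l \<ge> 0. Given the hold time h
  of the current state x, the lag l is uniform on [0, h), so by Fubini both sides of the invariance
  equation at time t become pi(dx) tau(dh|x)-integrals of integrals along the lag. Lags that see
  no jump before time t contribute the same term to both sides. The rest equates the mass found in
  A after a jump with the mass of A at lags below min t h; this follows from the renewal equation
  of the process restarted at a jump, integrated over [0, t), and the stationarity of pi under
  kappa = tau \<otimes> kc.
\<close>

lemma measurable_nn_integral_kernel[measurable (raw)]:
  assumes "L \<in> N \<rightarrow>\<^sub>M subprob_algebra P"
    and "case_prod f \<in> borel_measurable (N \<Otimes>\<^sub>M P)"
  shows "(\<lambda>x. \<integral>\<^sup>+ y. f x y \<partial>L x) \<in> borel_measurable N"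
  using nn_integral_measurable_subprob_algebra2[OF assms(2,1)] by simp

(* The measurability prover does not split membership in an interval with varying endpoints. *)
lemma pred_mem_atMost[measurable (raw)]:
  fixes f g :: "'b \<Rightarrow> 'c::{linorder_topology, second_countable_topology}"
  assumes [measurable]: "f \<in> borel_measurable N" "g \<in> borel_measurable N"
  shows "Measurable.pred N (\<lambda>x. f x \<in> {..g x})"
  by simp measurable

lemma pred_mem_greaterThan[measurable (raw)]:
  fixes f g :: "'b \<Rightarrow> 'c::{linorder_topology, second_countable_topology}"
  assumes [measurable]: "f \<in> borel_measurable N" "g \<in> borel_measurable N"
  shows "Measurable.pred N (\<lambda>x. f x \<in> {g x<..})"
  by simp measurable

lemma pred_mem_lessThan[measurable (raw)]:
  fixes f g :: "'b \<Rightarrow> 'c::{linorder_topology, second_countable_topology}"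
  assumes [measurable]: "f \<in> borel_measurable N" "g \<in> borel_measurable N"
  shows "Measurable.pred N (\<lambda>x. f x \<in> {..<g x})"
  by simp measurable

lemma pred_mem_atLeastLessThan[measurable (raw)]:
  fixes f g k :: "'b \<Rightarrow> 'c::{linorder_topology, second_countable_topology}"
  assumes [measurable]: "f \<in> borel_measurable N" "g \<in> borel_measurable N" "k \<in> borel_measurable N"
  shows "Measurable.pred N (\<lambda>x. f x \<in> {g x..<k x})"
  by simp measurable

section \<open>Integrals along the real line\<close>

lemma set_nn_integral_lborel_split:
  fixes f :: "real \<Rightarrow> ennreal"
  assumes [measurable]: "f \<in> borel_measurable borel" and "a \<le> b" "b \<le> c"
  shows "(\<integral>\<^sup>+r\<in>{a..<c}. f r \<partial>lborel) = (\<integral>\<^sup>+r\<in>{a..<b}. f r \<partial>lborel) + (\<integral>\<^sup>+r\<in>{b..<c}. f r \<partial>lborel)"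
  using nn_integral_disjoint_pair[of f lborel "{a..<b}" "{b..<c}"] ivl_disj_un_two(3)[OF assms(2,3)]
  by simp

lemma set_nn_integral_lborel_shift:
  fixes f :: "real \<Rightarrow> ennreal"
  assumes [measurable]: "f \<in> borel_measurable borel"
  shows "(\<integral>\<^sup>+r\<in>{a..<b}. f r \<partial>lborel) = (\<integral>\<^sup>+r\<in>{a - c..<b - c}. f (r + c) \<partial>lborel)"
proof -
  have "(\<integral>\<^sup>+r\<in>{a..<b}. f r \<partial>lborel)
      = ennreal \<bar>1\<bar> * (\<integral>\<^sup>+r. f (c + 1 * r) * indicator {a..<b} (c + 1 * r) \<partial>lborel)"
    by (rule nn_integral_real_affine) simp_all
  also have "\<dots> = (\<integral>\<^sup>+r\<in>{a - c..<b - c}. f (r + c) \<partial>lborel)"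
    unfolding abs_one ennreal_1 mult_1 by (intro nn_integral_cong) (auto simp: indicator_def add.commute)
  finally show ?thesis .
qed

lemma nn_integral_lborel_swap:
  fixes \<mu> :: "'b measure"
  assumes "sigma_finite_measure \<mu>" and "sets \<mu> = sets N"
    and "case_prod f \<in> borel_measurable (N \<Otimes>\<^sub>M borel)"
  shows "(\<integral>\<^sup>+r. \<integral>\<^sup>+y. f y r \<partial>\<mu> \<partial>lborel) = (\<integral>\<^sup>+y. \<integral>\<^sup>+r. f y r \<partial>lborel \<partial>\<mu>)"
proof -
  interpret pair_sigma_finite \<mu> lborel
    by (intro pair_sigma_finite.intro assms(1) lborel.sigma_finite_measure_axioms)
  have "sets (\<mu> \<Otimes>\<^sub>M lborel) = sets (N \<Otimes>\<^sub>M borel)"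
    by (intro sets_pair_measure_cong assms(2)) simp
  then have "case_prod f \<in> borel_measurable (\<mu> \<Otimes>\<^sub>M lborel)"
    using assms(3) measurable_cong_sets by blast
  then show ?thesis by (rule Fubini')
qed

lemma nn_integral_survival:
  fixes \<mu> :: "real measure"
  assumes "sigma_finite_measure \<mu>" and "sets \<mu> = sets borel"
    and [measurable]: "g \<in> borel_measurable borel" "S \<in> sets borel"
  shows "(\<integral>\<^sup>+l\<in>S. emeasure \<mu> {l<..} * g l \<partial>lborel) = (\<integral>\<^sup>+h. (\<integral>\<^sup>+l\<in>S \<inter> {..<h}. g l \<partial>lborel) \<partial>\<mu>)"
proof -
  have "(\<integral>\<^sup>+l\<in>S. emeasure \<mu> {l<..} * g l \<partial>lborel) = (\<integral>\<^sup>+l. \<integral>\<^sup>+h. g l * indicator (S \<inter> {..<h}) l \<partial>\<mu> \<partial>lborel)"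
  proof (intro nn_integral_cong)
    fix l
    have "(\<integral>\<^sup>+h. g l * indicator (S \<inter> {..<h}) l \<partial>\<mu>) = (\<integral>\<^sup>+h. (g l * indicator S l) * indicator {l<..} h \<partial>\<mu>)"
      by (intro nn_integral_cong) (auto simp: indicator_def)
    also have "\<dots> = g l * indicator S l * emeasure \<mu> {l<..}"
      using assms(2) by (intro nn_integral_cmult_indicator) simp
    finally show "emeasure \<mu> {l<..} * g l * indicator S l = (\<integral>\<^sup>+h. g l * indicator (S \<inter> {..<h}) l \<partial>\<mu>)"
      by (simp add: ac_simps)
  qed
  also have "\<dots> = (\<integral>\<^sup>+h. (\<integral>\<^sup>+l\<in>S \<inter> {..<h}. g l \<partial>lborel) \<partial>\<mu>)"
    by (rule nn_integral_lborel_swap[OF assms(1,2)]) measurable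
  finally show ?thesis .
qed

lemma nn_integral_survival_eq_mean:
  fixes \<mu> :: "real measure"
  assumes "finite_measure \<mu>" and "sets \<mu> = sets borel"
    and "AE h in \<mu>. 0 \<le> h" and "integrable \<mu> (\<lambda>h. h)"
  shows "(\<integral>\<^sup>+l\<in>{0..}. emeasure \<mu> {l<..} \<partial>lborel) = ennreal (\<integral>h. h \<partial>\<mu>)"
proof -
  interpret finite_measure \<mu> by fact
  have "(\<integral>\<^sup>+l\<in>{0..}. emeasure \<mu> {l<..} \<partial>lborel) = (\<integral>\<^sup>+h. (\<integral>\<^sup>+l\<in>{0..} \<inter> {..<h}. 1 \<partial>lborel) \<partial>\<mu>)"
    using nn_integral_survival[OF sigma_finite_measure_axioms assms(2), of "\<lambda>_. 1" "{0..}"] by simp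
  also have "\<dots> = (\<integral>\<^sup>+h. ennreal h \<partial>\<mu>)"
    using assms(3) by (intro nn_integral_cong_AE) (auto simp: atLeastLessThan_def[symmetric])
  also have "\<dots> = ennreal (\<integral>h. h \<partial>\<mu>)"
    using assms(3,4) by (intro nn_integral_eq_integral)
  finally show ?thesis .
qed

section \<open>Hold-time kernels and the anytime distribution\<close>

locale hold_time_kernels =
  fixes M :: "'a measure" and \<tau> :: "'a \<Rightarrow> real measure" and kc :: "'a \<Rightarrow> real \<Rightarrow> 'a measure"
  assumes kc_measurable: "(\<lambda>(x, h). kc x h) \<in> M \<Otimes>\<^sub>M borel \<rightarrow>\<^sub>M prob_algebra M"
    and tau_measurable: "\<tau> \<in> M \<rightarrow>\<^sub>M prob_algebra borel"
begin

lemma tau_subprob[measurable]: "\<tau> \<in> M \<rightarrow>\<^sub>M subprob_algebra borel"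
  using measurable_prob_algebraD[OF tau_measurable] .

lemma kc_subprob[measurable]:
  assumes [measurable]: "f \<in> N \<rightarrow>\<^sub>M M" "g \<in> borel_measurable N"
  shows "(\<lambda>y. kc (f y) (g y)) \<in> N \<rightarrow>\<^sub>M subprob_algebra M"
  using measurable_compose[OF measurable_Pair[OF assms] measurable_prob_algebraD[OF kc_measurable]]
  by simp

lemma
  assumes "x \<in> space M"
  shows prob_space_tau: "prob_space (\<tau> x)" and sets_tau: "sets (\<tau> x) = sets borel"
  using measurable_space[OF tau_measurable assms] by (auto simp: space_prob_algebra)

lemma
  assumes "x \<in> space M"
  shows prob_space_kc: "prob_space (kc x h)" and sets_kc: "sets (kc x h) = sets M"
  using measurable_space[OF kc_measurable, of "(x, h)"] assms
  by (auto simp: space_prob_algebra space_pair_measure)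

lemma space_kc: "x \<in> space M \<Longrightarrow> space (kc x h) = space M"
  using sets_eq_imp_space_eq[OF sets_kc] .

lemma borel_measurable_tau: "x \<in> space M \<Longrightarrow> f \<in> borel_measurable borel \<Longrightarrow> f \<in> borel_measurable (\<tau> x)"
  using measurable_cong_sets[OF sets_tau refl] by blast

lemma borel_measurable_kc: "x \<in> space M \<Longrightarrow> f \<in> borel_measurable M \<Longrightarrow> f \<in> borel_measurable (kc x h)"
  using measurable_cong_sets[OF sets_kc refl] by blast

lemma nn_integral_tau_lborel_swap:
  assumes "x \<in> space M" and "case_prod f \<in> borel_measurable (borel \<Otimes>\<^sub>M borel)"
  shows "(\<integral>\<^sup>+l. \<integral>\<^sup>+h. f h l \<partial>\<tau> x \<partial>lborel) = (\<integral>\<^sup>+h. \<integral>\<^sup>+l. f h l \<partial>lborel \<partial>\<tau> x)"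
  using assms prob_space_tau[THEN prob_space_imp_sigma_finite]
  by (intro nn_integral_lborel_swap[of _ borel]) (simp_all add: sets_tau)

lemma nn_integral_kc_lborel_swap:
  assumes "x \<in> space M" and "case_prod f \<in> borel_measurable (M \<Otimes>\<^sub>M borel)"
  shows "(\<integral>\<^sup>+r. \<integral>\<^sup>+y. f y r \<partial>kc x h \<partial>lborel) = (\<integral>\<^sup>+y. \<integral>\<^sup>+r. f y r \<partial>lborel \<partial>kc x h)"
  using assms prob_space_kc[THEN prob_space_imp_sigma_finite]
  by (intro nn_integral_lborel_swap[of _ M]) (simp_all add: sets_kc)

lemma nn_integral_tau_survival:
  assumes "x \<in> space M" and "g \<in> borel_measurable borel" "S \<in> sets borel"
  shows "(\<integral>\<^sup>+l\<in>S. emeasure (\<tau> x) {l<..} * g l \<partial>lborel) = (\<integral>\<^sup>+h. (\<integral>\<^sup>+l\<in>S \<inter> {..<h}. g l \<partial>lborel) \<partial>\<tau> x)"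
  using assms prob_space_tau[THEN prob_space_imp_sigma_finite]
  by (intro nn_integral_survival) (simp_all add: sets_tau)

lemma emeasure_tau_eq_nn_integral:
  "x \<in> space M \<Longrightarrow> S \<in> sets borel \<Longrightarrow> emeasure (\<tau> x) S = (\<integral>\<^sup>+h. indicator S h \<partial>\<tau> x)"
  by (subst nn_integral_indicator) (auto simp: sets_tau)

lemma measurable_survival[measurable]:
  assumes [measurable]: "f \<in> N \<rightarrow>\<^sub>M M" "g \<in> borel_measurable N"
  shows "(\<lambda>y. emeasure (\<tau> (f y)) {g y<..}) \<in> borel_measurable N"
proof -
  have "(\<lambda>y. \<integral>\<^sup>+h. indicator {g y<..} h \<partial>\<tau> (f y)) \<in> borel_measurable N"
    by measurable
  then show ?thesis
    by (rule measurable_cong[THEN iffD1, rotated])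
       (intro emeasure_tau_eq_nn_integral[symmetric] measurable_space[OF assms(1)] borel_open, simp_all)
qed

(* No positivity of the mean is needed: for mean_hold_total \<le> 0 both sides are 0, since ennreal
   maps nonpositive reals to 0. *)
lemma nn_integral_anytime_dist:
  assumes sets_pi: "sets \<pi> = sets M" and f[measurable]: "f \<in> borel_measurable (M \<Otimes>\<^sub>M borel)"
  shows "(\<integral>\<^sup>+p. f p \<partial>anytime_dist \<pi> \<tau>)
     = ennreal (1 / mean_hold_total \<pi> \<tau>) * (\<integral>\<^sup>+x. (\<integral>\<^sup>+l\<in>{0..}. emeasure (\<tau> x) {l<..} * f (x, l) \<partial>lborel) \<partial>\<pi>)"
proof -
  let ?E = "mean_hold_total \<pi> \<tau>"
  let ?d = "\<lambda>(x, l). ennreal (indicator {0..} l * measure (\<tau> x) {l<..} / ?E)"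
  have sets_pair: "sets (\<pi> \<Otimes>\<^sub>M lborel) = sets (M \<Otimes>\<^sub>M borel)"
    by (intro sets_pair_measure_cong sets_pi) simp
  have space_pi: "space \<pi> = space M"
    using sets_eq_imp_space_eq[OF sets_pi] .
  have "?d \<in> borel_measurable (M \<Otimes>\<^sub>M borel)"
    unfolding measure_def by measurable
  then have d: "?d \<in> borel_measurable (\<pi> \<Otimes>\<^sub>M lborel)"
    using measurable_cong_sets[OF sets_pair refl] by blast
  have d_eq: "ennreal (indicator {0..} l * measure (\<tau> x) {l<..} / ?E)
      = ennreal (1 / ?E) * (emeasure (\<tau> x) {l<..} * indicator {0..} l)"
    if x: "x \<in> space M" for x l
  proof -
    interpret prob_space "\<tau> x" by (rule prob_space_tau[OF x])
    show ?thesis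
      by (cases "0 < ?E")
         (auto simp: emeasure_eq_measure indicator_def ennreal_mult[symmetric] ennreal_neg
           divide_nonneg_nonpos)
  qed
  have "(\<integral>\<^sup>+p. f p \<partial>anytime_dist \<pi> \<tau>) = (\<integral>\<^sup>+p. ?d p * f p \<partial>(\<pi> \<Otimes>\<^sub>M lborel))"
    unfolding anytime_dist_def using measurable_cong_sets[OF sets_pair refl] f
    by (intro nn_integral_density d) blast
  also have "\<dots> = (\<integral>\<^sup>+x. \<integral>\<^sup>+l. ?d (x, l) * f (x, l) \<partial>lborel \<partial>\<pi>)"
    using measurable_cong_sets[OF sets_pair refl] f
    by (intro lborel.nn_integral_fst[symmetric] borel_measurable_times_ennreal d) blast
  also have "\<dots> = (\<integral>\<^sup>+x. ennreal (1 / ?E) * (\<integral>\<^sup>+l\<in>{0..}. emeasure (\<tau> x) {l<..} * f (x, l) \<partial>lborel) \<partial>\<pi>)"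
    by (intro nn_integral_cong, subst nn_integral_cmult[symmetric])
       (simp_all add: space_pi d_eq ac_simps)
  also have "\<dots> = ennreal (1 / ?E) * (\<integral>\<^sup>+x. (\<integral>\<^sup>+l\<in>{0..}. emeasure (\<tau> x) {l<..} * f (x, l) \<partial>lborel) \<partial>\<pi>)"
  proof (rule nn_integral_cmult)
    have "(\<lambda>x. \<integral>\<^sup>+l\<in>{0..}. emeasure (\<tau> x) {l<..} * f (x, l) \<partial>lborel) \<in> borel_measurable M"
      by measurable
    then show "(\<lambda>x. \<integral>\<^sup>+l\<in>{0..}. emeasure (\<tau> x) {l<..} * f (x, l) \<partial>lborel) \<in> borel_measurable \<pi>"
      using measurable_cong_sets[OF sets_pi refl] by blast
  qed
  finally show ?thesis .
qed

lemma emeasure_anytime_dist: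
  assumes sets_pi: "sets \<pi> = sets M" and A: "A \<in> sets (M \<Otimes>\<^sub>M borel)"
  shows "emeasure (anytime_dist \<pi> \<tau>) A
     = ennreal (1 / mean_hold_total \<pi> \<tau>)
       * (\<integral>\<^sup>+x. (\<integral>\<^sup>+l\<in>{0..}. emeasure (\<tau> x) {l<..} * indicator A (x, l) \<partial>lborel) \<partial>\<pi>)"
proof -
  have "sets (anytime_dist \<pi> \<tau>) = sets (M \<Otimes>\<^sub>M borel)"
    unfolding anytime_dist_def by (simp add: sets_pair_measure_cong[OF sets_pi])
  then have "emeasure (anytime_dist \<pi> \<tau>) A = (\<integral>\<^sup>+p. indicator A p \<partial>anytime_dist \<pi> \<tau>)"
    using A by simp
  also have "\<dots> = ennreal (1 / mean_hold_total \<pi> \<tau>)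
      * (\<integral>\<^sup>+x. (\<integral>\<^sup>+l\<in>{0..}. emeasure (\<tau> x) {l<..} * indicator A (x, l) \<partial>lborel) \<partial>\<pi>)"
    using A by (intro nn_integral_anytime_dist[OF sets_pi]) simp
  finally show ?thesis .
qed

context
  fixes \<pi> :: "'a measure" and C :: real
  assumes prob_space_pi: "prob_space \<pi>" and sets_pi: "sets \<pi> = sets M"
    and hold_nonneg: "\<forall>x\<in>space M. AE h in \<tau> x. 0 \<le> h"
    and bounded: "\<forall>x\<in>space M. integrable (\<tau> x) (\<lambda>h. h) \<and> mean_hold \<tau> x \<le> C"
begin

lemma nn_integral_survival_eq_mean_hold:
  "x \<in> space M \<Longrightarrow> (\<integral>\<^sup>+l\<in>{0..}. emeasure (\<tau> x) {l<..} \<partial>lborel) = ennreal (mean_hold \<tau> x)"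
  unfolding mean_hold_def using hold_nonneg bounded
  by (intro nn_integral_survival_eq_mean prob_space_tau[THEN prob_space.finite_measure] sets_tau) auto

lemma mean_hold_nonneg: "x \<in> space M \<Longrightarrow> 0 \<le> mean_hold \<tau> x"
  unfolding mean_hold_def using hold_nonneg by (intro integral_nonneg_AE) auto

lemma integrable_mean_hold: "integrable \<pi> (mean_hold \<tau>)"
proof -
  interpret prob_space \<pi> by (rule prob_space_pi)
  have "(\<lambda>x. enn2real (\<integral>\<^sup>+l\<in>{0..}. emeasure (\<tau> x) {l<..} \<partial>lborel)) \<in> borel_measurable M"
    by measurable
  then have "mean_hold \<tau> \<in> borel_measurable M"
    by (rule measurable_cong[THEN iffD1, rotated])
       (simp add: nn_integral_survival_eq_mean_hold mean_hold_nonneg)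
  then show ?thesis
    using measurable_cong_sets[OF sets_pi refl] bounded mean_hold_nonneg
    by (intro integrable_const_bound[where B=C] AE_I2) (auto simp: sets_eq_imp_space_eq[OF sets_pi])
qed

lemma nn_integral_survival_eq_mean_hold_total:
  "(\<integral>\<^sup>+x. (\<integral>\<^sup>+l\<in>{0..}. emeasure (\<tau> x) {l<..} \<partial>lborel) \<partial>\<pi>) = ennreal (mean_hold_total \<pi> \<tau>)"
proof -
  have "(\<integral>\<^sup>+x. (\<integral>\<^sup>+l\<in>{0..}. emeasure (\<tau> x) {l<..} \<partial>lborel) \<partial>\<pi>) = (\<integral>\<^sup>+x. ennreal (mean_hold \<tau> x) \<partial>\<pi>)"
    by (intro nn_integral_cong nn_integral_survival_eq_mean_hold) (simp add: sets_eq_imp_space_eq[OF sets_pi])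
  also have "\<dots> = ennreal (mean_hold_total \<pi> \<tau>)"
    unfolding mean_hold_total_def using integrable_mean_hold
    by (intro nn_integral_eq_integral AE_I2) (auto simp: sets_eq_imp_space_eq[OF sets_pi] mean_hold_nonneg)
  finally show ?thesis .
qed

lemma mean_hold_total_ge:
  assumes "\<forall>x\<in>space M. AE h in \<tau> x. c \<le> h"
  shows "c \<le> mean_hold_total \<pi> \<tau>"
proof -
  interpret prob_space \<pi> by (rule prob_space_pi)
  have "c \<le> mean_hold \<tau> x" if x: "x \<in> space M" for x
    using assms bounded x unfolding mean_hold_def
    by (intro prob_space.integral_ge_const[OF prob_space_tau[OF x]]) auto
  then show ?thesis
    unfolding mean_hold_total_def using integrable_mean_hold
    by (intro integral_ge_const AE_I2) (simp_all add: sets_eq_imp_space_eq[OF sets_pi])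
qed

lemma prob_space_anytime_dist:
  assumes "0 < mean_hold_total \<pi> \<tau>"
  shows "prob_space (anytime_dist \<pi> \<tau>)"
proof
  have space_pi: "space \<pi> = space M"
    using sets_eq_imp_space_eq[OF sets_pi] .
  have space: "space (anytime_dist \<pi> \<tau>) = space M \<times> UNIV"
    unfolding anytime_dist_def by (simp add: space_pair_measure space_pi)
  have "emeasure (anytime_dist \<pi> \<tau>) (space (anytime_dist \<pi> \<tau>))
      = ennreal (1 / mean_hold_total \<pi> \<tau>) * (\<integral>\<^sup>+x. (\<integral>\<^sup>+l\<in>{0..}. emeasure (\<tau> x) {l<..} \<partial>lborel) \<partial>\<pi>)"
    unfolding space
    by (subst emeasure_anytime_dist[OF sets_pi])
       (auto simp: space_pi intro!: arg_cong2[where f="(*)"] nn_integral_cong)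
  also have "\<dots> = 1"
    using assms by (simp add: nn_integral_survival_eq_mean_hold_total ennreal_mult[symmetric] del: ennreal_1)
  finally show "emeasure (anytime_dist \<pi> \<tau>) (space (anytime_dist \<pi> \<tau>)) = 1" .
qed

end

end

section \<open>The renewal equation\<close>

locale renewal_event = hold_time_kernels +
  fixes A :: "('a \<times> real) set"
  assumes A_sets[measurable]: "A \<in> sets (M \<Otimes>\<^sub>M borel)"
begin

abbreviation fresh :: "'a \<Rightarrow> real \<Rightarrow> ennreal" where
  "fresh x s \<equiv> fresh_law \<tau> kc x s A"

abbreviation after_jump :: "'a \<Rightarrow> real \<Rightarrow> real \<Rightarrow> ennreal" where
  "after_jump x h r \<equiv> \<integral>\<^sup>+x'. fresh x' r \<partial>kc x h"

abbreviation trans_given_hold :: "'a \<Rightarrow> real \<Rightarrow> real \<Rightarrow> real \<Rightarrow> ennreal" where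
  "trans_given_hold x l h t \<equiv>
     (if t < h - l then indicator A (x, l + t) else after_jump x h (t - (h - l)))"

lemma measurable_fresh_part_joint:
  "(\<lambda>p. fresh_part \<tau> kc n (fst p) (snd p) A) \<in> borel_measurable (M \<Otimes>\<^sub>M borel)"
proof (induction n)
  case 0
  then show ?case by simp measurable
next
  case (Suc n)
  have "(\<lambda>p. (snd p, snd (fst (fst p)) - snd (fst p)))
      \<in> ((M \<Otimes>\<^sub>M borel) \<Otimes>\<^sub>M borel) \<Otimes>\<^sub>M M \<rightarrow>\<^sub>M M \<Otimes>\<^sub>M (borel :: real measure)"
    by measurable
  from measurable_compose[OF this Suc.IH]
  have [measurable]: "(\<lambda>p. fresh_part \<tau> kc n (snd p) (snd (fst (fst p)) - snd (fst p)) A)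
      \<in> borel_measurable (((M \<Otimes>\<^sub>M borel) \<Otimes>\<^sub>M borel) \<Otimes>\<^sub>M M)"
    by simp
  show ?case by simp measurable
qed

lemma measurable_fresh_part[measurable]:
  assumes "f \<in> N \<rightarrow>\<^sub>M M" "g \<in> borel_measurable N"
  shows "(\<lambda>y. fresh_part \<tau> kc n (f y) (g y) A) \<in> borel_measurable N"
  using measurable_compose[OF measurable_Pair[OF assms] measurable_fresh_part_joint] by simp

lemma measurable_fresh_law[measurable]:
  assumes [measurable]: "f \<in> N \<rightarrow>\<^sub>M M" "g \<in> borel_measurable N"
  shows "(\<lambda>y. fresh (f y) (g y)) \<in> borel_measurable N"
  unfolding fresh_law_def by measurable

lemma sum_fresh_part_le_1: "x \<in> space M \<Longrightarrow> (\<Sum>n<N. fresh_part \<tau> kc n x s A) \<le> 1"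
proof (induction N arbitrary: x s)
  case 0
  then show ?case by simp
next
  case (Suc N)
  note x[measurable] = Suc.prems
  interpret prob_space "\<tau> x" by (rule prob_space_tau[OF x])
  have "(\<Sum>n<N. fresh_part \<tau> kc (Suc n) x s A)
      = (\<Sum>n<N. \<integral>\<^sup>+h. indicator {..s} h * (\<integral>\<^sup>+x'. fresh_part \<tau> kc n x' (s - h) A \<partial>kc x h) \<partial>\<tau> x)"
    by simp
  also have "\<dots> = (\<integral>\<^sup>+h. (\<Sum>n<N. indicator {..s} h * (\<integral>\<^sup>+x'. fresh_part \<tau> kc n x' (s - h) A \<partial>kc x h)) \<partial>\<tau> x)"
    by (rule nn_integral_sum[symmetric]) (intro borel_measurable_tau[OF x]; measurable)
  also have "\<dots> = (\<integral>\<^sup>+h. indicator {..s} h * (\<integral>\<^sup>+x'. (\<Sum>n<N. fresh_part \<tau> kc n x' (s - h) A) \<partial>kc x h) \<partial>\<tau> x)"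
    by (intro nn_integral_cong, subst nn_integral_sum)
       (auto simp: sum_distrib_left intro!: borel_measurable_kc[OF x])
  also have "\<dots> \<le> (\<integral>\<^sup>+h. indicator {..s} h \<partial>\<tau> x)"
  proof (intro nn_integral_mono)
    fix h
    interpret K: prob_space "kc x h" by (rule prob_space_kc[OF x])
    have "(\<integral>\<^sup>+x'. (\<Sum>n<N. fresh_part \<tau> kc n x' (s - h) A) \<partial>kc x h) \<le> (\<integral>\<^sup>+x'. 1 \<partial>kc x h)"
      by (intro nn_integral_mono Suc.IH) (simp add: space_kc[OF x])
    then show "indicator {..s} h * (\<integral>\<^sup>+x'. (\<Sum>n<N. fresh_part \<tau> kc n x' (s - h) A) \<partial>kc x h)
        \<le> indicator {..s} h"
      using K.emeasure_space_1 by (simp add: indicator_def)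
  qed
  also have "\<dots> = emeasure (\<tau> x) {..s}"
    by (simp add: emeasure_tau_eq_nn_integral[OF x])
  finally have "(\<Sum>n<N. fresh_part \<tau> kc (Suc n) x s A) \<le> emeasure (\<tau> x) {..s}" .
  moreover have "fresh_part \<tau> kc 0 x s A \<le> emeasure (\<tau> x) {s<..}"
    by (simp add: indicator_def)
  ultimately have "(\<Sum>n<Suc N. fresh_part \<tau> kc n x s A) \<le> emeasure (\<tau> x) {s<..} + emeasure (\<tau> x) {..s}"
    by (simp only: sum.lessThan_Suc_shift add_mono)
  also have "\<dots> = emeasure (\<tau> x) ({s<..} \<union> {..s})"
    using sets_tau[OF x] by (intro plus_emeasure) auto
  also have "\<dots> \<le> 1"
    by (rule emeasure_le_1)
  finally show ?case .
qed

lemma fresh_law_le_1: "x \<in> space M \<Longrightarrow> fresh x s \<le> 1"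
  unfolding fresh_law_def by (intro suminf_le_const summableI sum_fresh_part_le_1)

lemma fresh_law_renewal:
  assumes x[measurable]: "x \<in> space M"
  shows "fresh x s = emeasure (\<tau> x) {s<..} * indicator A (x, s) +
     (\<integral>\<^sup>+h. indicator {..s} h * after_jump x h (s - h) \<partial>\<tau> x)"
proof -
  have "fresh x s = (\<Sum>n. fresh_part \<tau> kc (n + 1) x s A) + fresh_part \<tau> kc 0 x s A"
    unfolding fresh_law_def by (subst suminf_offset[of _ 1]) simp_all
  also have "(\<Sum>n. fresh_part \<tau> kc (n + 1) x s A)
      = (\<Sum>n. \<integral>\<^sup>+h. indicator {..s} h * (\<integral>\<^sup>+x'. fresh_part \<tau> kc n x' (s - h) A \<partial>kc x h) \<partial>\<tau> x)"
    by simp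
  also have "\<dots> = (\<integral>\<^sup>+h. (\<Sum>n. indicator {..s} h * (\<integral>\<^sup>+x'. fresh_part \<tau> kc n x' (s - h) A \<partial>kc x h)) \<partial>\<tau> x)"
    by (rule nn_integral_suminf[symmetric]) (intro borel_measurable_tau[OF x]; measurable)
  also have "\<dots> = (\<integral>\<^sup>+h. indicator {..s} h * after_jump x h (s - h) \<partial>\<tau> x)"
    unfolding fresh_law_def
    by (intro nn_integral_cong, subst nn_integral_suminf) (auto intro!: borel_measurable_kc[OF x])
  finally show ?thesis by (simp add: add.commute)
qed

lemma set_nn_integral_fresh_law:
  assumes x[measurable]: "x \<in> space M" and nonneg: "AE h in \<tau> x. 0 \<le> h"
  shows "(\<integral>\<^sup>+r\<in>{0..<t}. fresh x r \<partial>lborel)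
     = (\<integral>\<^sup>+h. (\<integral>\<^sup>+r\<in>{0..<min t h}. indicator A (x, r) \<partial>lborel) \<partial>\<tau> x)
       + (\<integral>\<^sup>+h. (\<integral>\<^sup>+r\<in>{0..<t - h}. after_jump x h r \<partial>lborel) \<partial>\<tau> x)"
proof -
  have "(\<integral>\<^sup>+r\<in>{0..<t}. fresh x r \<partial>lborel)
     = (\<integral>\<^sup>+r\<in>{0..<t}. emeasure (\<tau> x) {r<..} * indicator A (x, r) \<partial>lborel)
       + (\<integral>\<^sup>+r. (\<integral>\<^sup>+h. indicator {..r} h * after_jump x h (r - h) \<partial>\<tau> x) * indicator {0..<t} r \<partial>lborel)"
    by (subst fresh_law_renewal[OF x], subst distrib_right, rule nn_integral_add) measurable
  also have "(\<integral>\<^sup>+r\<in>{0..<t}. emeasure (\<tau> x) {r<..} * indicator A (x, r) \<partial>lborel)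
      = (\<integral>\<^sup>+h. (\<integral>\<^sup>+r\<in>{0..<min t h}. indicator A (x, r) \<partial>lborel) \<partial>\<tau> x)"
  proof -
    have "{0..<t} \<inter> {..<h} = {0..<min t h}" for h :: real
      by auto
    then show ?thesis
      by (subst nn_integral_tau_survival[OF x]) simp_all
  qed
  also have "(\<integral>\<^sup>+r. (\<integral>\<^sup>+h. indicator {..r} h * after_jump x h (r - h) \<partial>\<tau> x) * indicator {0..<t} r \<partial>lborel)
      = (\<integral>\<^sup>+r. \<integral>\<^sup>+h. indicator {..r} h * after_jump x h (r - h) * indicator {0..<t} r \<partial>\<tau> x \<partial>lborel)"
    by (intro nn_integral_cong nn_integral_multc[symmetric] borel_measurable_tau[OF x]) measurable
  also have "\<dots> = (\<integral>\<^sup>+h. \<integral>\<^sup>+r. indicator {..r} h * after_jump x h (r - h) * indicator {0..<t} r \<partial>lborel \<partial>\<tau> x)"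
    by (rule nn_integral_tau_lborel_swap[OF x]) measurable
  also have "\<dots> = (\<integral>\<^sup>+h. (\<integral>\<^sup>+r\<in>{0..<t - h}. after_jump x h r \<partial>lborel) \<partial>\<tau> x)"
  proof (intro nn_integral_cong_AE, use nonneg in \<open>elim AE_mp\<close>, intro AE_I2 impI)
    fix h :: real assume "0 \<le> h"
    then have "(\<integral>\<^sup>+r. indicator {..r} h * after_jump x h (r - h) * indicator {0..<t} r \<partial>lborel)
        = (\<integral>\<^sup>+r\<in>{h..<t}. after_jump x h (r - h) \<partial>lborel)"
      by (intro nn_integral_cong) (auto simp: indicator_def)
    also have "\<dots> = (\<integral>\<^sup>+r\<in>{0..<t - h}. after_jump x h r \<partial>lborel)"
      by (subst set_nn_integral_lborel_shift[where c=h]) simp_all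
    finally show "(\<integral>\<^sup>+r. indicator {..r} h * after_jump x h (r - h) * indicator {0..<t} r \<partial>lborel)
        = (\<integral>\<^sup>+r\<in>{0..<t - h}. after_jump x h r \<partial>lborel)" .
  qed
  finally show ?thesis .
qed

lemma set_nn_integral_trans_given_hold:
  assumes x[measurable]: "x \<in> space M" and "0 \<le> t" "0 \<le> h"
  shows "(\<integral>\<^sup>+l\<in>{0..<h}. trans_given_hold x l h t \<partial>lborel)
     = (\<integral>\<^sup>+s\<in>{t..<h}. indicator A (x, s) \<partial>lborel) + (\<integral>\<^sup>+r\<in>{max 0 (t - h)..<t}. after_jump x h r \<partial>lborel)"
proof -
  define m where "m = max 0 (h - t)"
  have "(\<integral>\<^sup>+l\<in>{0..<h}. trans_given_hold x l h t \<partial>lborel)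
      = (\<integral>\<^sup>+l\<in>{0..<m}. trans_given_hold x l h t \<partial>lborel) + (\<integral>\<^sup>+l\<in>{m..<h}. trans_given_hold x l h t \<partial>lborel)"
    using assms(2,3) unfolding m_def by (intro set_nn_integral_lborel_split) simp_all
  also have "(\<integral>\<^sup>+l\<in>{0..<m}. trans_given_hold x l h t \<partial>lborel) = (\<integral>\<^sup>+l\<in>{0..<m}. indicator A (x, l + t) \<partial>lborel)"
    by (intro set_nn_integral_cong) (auto simp: m_def)
  also have "\<dots> = (\<integral>\<^sup>+s\<in>{t..<h}. indicator A (x, s) \<partial>lborel)"
    by (subst set_nn_integral_lborel_shift[where c=t]) (simp_all add: m_def max_def)
  also have "(\<integral>\<^sup>+l\<in>{m..<h}. trans_given_hold x l h t \<partial>lborel)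
      = (\<integral>\<^sup>+l\<in>{m..<h}. after_jump x h (l + (t - h)) \<partial>lborel)"
    by (intro set_nn_integral_cong) (auto simp: m_def algebra_simps)
  also have "\<dots> = (\<integral>\<^sup>+r\<in>{max 0 (t - h)..<t}. after_jump x h r \<partial>lborel)"
    by (subst (2) set_nn_integral_lborel_shift[where c="t - h"]) (simp_all add: m_def max_def)
  finally show ?thesis .
qed

(* Multiplied out, the identity also covers a vanishing survival probability, where trans_XL
   divides by 0. *)
lemma survival_times_trans_XL:
  assumes x: "x \<in> space M"
  shows "emeasure (\<tau> x) {l<..} * trans_XL \<tau> kc t x l A
     = (\<integral>\<^sup>+h. indicator {l<..} h * trans_given_hold x l h t \<partial>\<tau> x)"
proof (cases "emeasure (\<tau> x) {l<..} = 0")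
  case True
  have "(\<integral>\<^sup>+h. indicator {l<..} h * trans_given_hold x l h t \<partial>\<tau> x) \<le> (\<integral>\<^sup>+h. \<infinity> * indicator {l<..} h \<partial>\<tau> x)"
    by (intro nn_integral_mono) (simp add: indicator_def)
  also have "\<dots> = 0"
    using True sets_tau[OF x] by (subst nn_integral_cmult_indicator) simp_all
  finally show ?thesis using True by simp
next
  case False
  interpret prob_space "\<tau> x" by (rule prob_space_tau[OF x])
  show ?thesis
    using False unfolding trans_XL_def
    by (simp add: ennreal_times_divide emeasure_eq_measure mult.commute[of "ennreal _"] ennreal_mult_divide_eq)
qed

lemma nn_integral_survival_trans_XL:
  assumes x[measurable]: "x \<in> space M" and nonneg: "AE h in \<tau> x. 0 \<le> h" and "0 \<le> t"
  shows "(\<integral>\<^sup>+l\<in>{0..}. emeasure (\<tau> x) {l<..} * trans_XL \<tau> kc t x l A \<partial>lborel)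
     = (\<integral>\<^sup>+h. (\<integral>\<^sup>+s\<in>{t..<h}. indicator A (x, s) \<partial>lborel)
              + (\<integral>\<^sup>+r\<in>{max 0 (t - h)..<t}. after_jump x h r \<partial>lborel) \<partial>\<tau> x)"
proof -
  have "(\<integral>\<^sup>+l\<in>{0..}. emeasure (\<tau> x) {l<..} * trans_XL \<tau> kc t x l A \<partial>lborel)
      = (\<integral>\<^sup>+l. \<integral>\<^sup>+h. trans_given_hold x l h t * indicator {0..<h} l \<partial>\<tau> x \<partial>lborel)"
  proof (intro nn_integral_cong)
    fix l :: real
    have "(\<integral>\<^sup>+h. trans_given_hold x l h t * indicator {0..<h} l \<partial>\<tau> x)
        = (\<integral>\<^sup>+h. indicator {l<..} h * trans_given_hold x l h t * indicator {0..} l \<partial>\<tau> x)"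
      by (intro nn_integral_cong) (auto simp: indicator_def)
    also have "\<dots> = emeasure (\<tau> x) {l<..} * trans_XL \<tau> kc t x l A * indicator {0..} l"
      by (subst nn_integral_multc) (simp_all add: survival_times_trans_XL[OF x] borel_measurable_tau[OF x])
    finally show "emeasure (\<tau> x) {l<..} * trans_XL \<tau> kc t x l A * indicator {0..} l
        = (\<integral>\<^sup>+h. trans_given_hold x l h t * indicator {0..<h} l \<partial>\<tau> x)" ..
  qed
  also have "\<dots> = (\<integral>\<^sup>+h. (\<integral>\<^sup>+l\<in>{0..<h}. trans_given_hold x l h t \<partial>lborel) \<partial>\<tau> x)"
    by (rule nn_integral_tau_lborel_swap[OF x]) measurable
  also have "\<dots> = (\<integral>\<^sup>+h. (\<integral>\<^sup>+s\<in>{t..<h}. indicator A (x, s) \<partial>lborel)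
              + (\<integral>\<^sup>+r\<in>{max 0 (t - h)..<t}. after_jump x h r \<partial>lborel) \<partial>\<tau> x)"
    by (rule nn_integral_cong_AE, rule AE_mp[OF nonneg], intro AE_I2 impI)
       (simp add: set_nn_integral_trans_given_hold[OF x \<open>0 \<le> t\<close>])
  finally show ?thesis .
qed

lemma nn_integral_survival_indicator:
  assumes x[measurable]: "x \<in> space M" and nonneg: "AE h in \<tau> x. 0 \<le> h" and "0 \<le> t"
  shows "(\<integral>\<^sup>+l\<in>{0..}. emeasure (\<tau> x) {l<..} * indicator A (x, l) \<partial>lborel)
     = (\<integral>\<^sup>+h. (\<integral>\<^sup>+r\<in>{0..<min t h}. indicator A (x, r) \<partial>lborel)
              + (\<integral>\<^sup>+s\<in>{t..<h}. indicator A (x, s) \<partial>lborel) \<partial>\<tau> x)"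
proof -
  have "(\<integral>\<^sup>+l\<in>{0..}. emeasure (\<tau> x) {l<..} * indicator A (x, l) \<partial>lborel)
      = (\<integral>\<^sup>+h. (\<integral>\<^sup>+r\<in>{0..<h}. indicator A (x, r) \<partial>lborel) \<partial>\<tau> x)"
    by (subst nn_integral_tau_survival[OF x]) (simp_all add: atLeastLessThan_def)
  also have "\<dots> = (\<integral>\<^sup>+h. (\<integral>\<^sup>+r\<in>{0..<min t h}. indicator A (x, r) \<partial>lborel)
              + (\<integral>\<^sup>+s\<in>{min t h..<h}. indicator A (x, s) \<partial>lborel) \<partial>\<tau> x)"
    by (rule nn_integral_cong_AE, rule AE_mp[OF nonneg], intro AE_I2 impI)
       (rule set_nn_integral_lborel_split, use \<open>0 \<le> t\<close> in simp_all)
  also have "\<dots> = (\<integral>\<^sup>+h. (\<integral>\<^sup>+r\<in>{0..<min t h}. indicator A (x, r) \<partial>lborel)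
              + (\<integral>\<^sup>+s\<in>{t..<h}. indicator A (x, s) \<partial>lborel) \<partial>\<tau> x)"
    by (intro nn_integral_cong arg_cong2[where f="(+)"] refl set_nn_integral_cong) auto
  finally show ?thesis .
qed

lemma nn_integral_after_jump_split:
  assumes x[measurable]: "x \<in> space M" and nonneg: "AE h in \<tau> x. 0 \<le> h" and "0 \<le> t"
  shows "(\<integral>\<^sup>+h. (\<integral>\<^sup>+r\<in>{0..<t}. after_jump x h r \<partial>lborel) \<partial>\<tau> x)
     = (\<integral>\<^sup>+h. (\<integral>\<^sup>+r\<in>{0..<t - h}. after_jump x h r \<partial>lborel) \<partial>\<tau> x)
       + (\<integral>\<^sup>+h. (\<integral>\<^sup>+r\<in>{max 0 (t - h)..<t}. after_jump x h r \<partial>lborel) \<partial>\<tau> x)"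
proof -
  have "(\<integral>\<^sup>+r\<in>{0..<t}. after_jump x h r \<partial>lborel)
      = (\<integral>\<^sup>+r\<in>{0..<t - h}. after_jump x h r \<partial>lborel) + (\<integral>\<^sup>+r\<in>{max 0 (t - h)..<t}. after_jump x h r \<partial>lborel)"
    if "0 \<le> h" for h
  proof -
    have "{0..<max 0 (t - h)} = {0..<t - h}" by auto
    then show ?thesis
      using that \<open>0 \<le> t\<close> by (subst set_nn_integral_lborel_split[of _ _ "max 0 (t - h)"]) simp_all
  qed
  then have "(\<integral>\<^sup>+h. (\<integral>\<^sup>+r\<in>{0..<t}. after_jump x h r \<partial>lborel) \<partial>\<tau> x)
      = (\<integral>\<^sup>+h. (\<integral>\<^sup>+r\<in>{0..<t - h}. after_jump x h r \<partial>lborel)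
          + (\<integral>\<^sup>+r\<in>{max 0 (t - h)..<t}. after_jump x h r \<partial>lborel) \<partial>\<tau> x)"
    using nonneg by (intro nn_integral_cong_AE) auto
  also have "\<dots> = (\<integral>\<^sup>+h. (\<integral>\<^sup>+r\<in>{0..<t - h}. after_jump x h r \<partial>lborel) \<partial>\<tau> x)
      + (\<integral>\<^sup>+h. (\<integral>\<^sup>+r\<in>{max 0 (t - h)..<t}. after_jump x h r \<partial>lborel) \<partial>\<tau> x)"
    by (rule nn_integral_add) (intro borel_measurable_tau[OF x]; measurable)+
  finally show ?thesis .
qed

end

section \<open>Stationarity\<close>

locale stationary_renewal = renewal_event +
  fixes \<pi> :: "'a measure" and \<kappa> :: "'a \<Rightarrow> 'a measure"
  assumes sets_pi: "sets \<pi> = sets M" and prob_space_pi: "prob_space \<pi>"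
    and kappa_measurable: "\<kappa> \<in> M \<rightarrow>\<^sub>M prob_algebra M"
    and kappa_eq: "\<forall>x\<in>space M. \<kappa> x = \<tau> x \<bind> kc x"
    and pi_invariant: "\<pi> \<bind> \<kappa> = \<pi>"
    and hold_nonneg: "\<forall>x\<in>space M. AE h in \<tau> x. 0 \<le> h"
begin

lemma space_pi: "space \<pi> = space M"
  using sets_eq_imp_space_eq[OF sets_pi] .

lemma borel_measurable_pi: "f \<in> borel_measurable M \<Longrightarrow> f \<in> borel_measurable \<pi>"
  using measurable_cong_sets[OF sets_pi refl] by blast

lemma nn_integral_stationary_hold_jump:
  assumes f[measurable]: "f \<in> borel_measurable M"
  shows "(\<integral>\<^sup>+x. \<integral>\<^sup>+h. \<integral>\<^sup>+y. f y \<partial>kc x h \<partial>\<tau> x \<partial>\<pi>) = (\<integral>\<^sup>+x. f x \<partial>\<pi>)"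
proof -
  have kappa: "\<kappa> \<in> \<pi> \<rightarrow>\<^sub>M subprob_algebra M"
    using measurable_prob_algebraD[OF kappa_measurable] measurable_cong_sets[OF sets_pi refl] by blast
  have "(\<integral>\<^sup>+x. f x \<partial>\<pi>) = (\<integral>\<^sup>+x. \<integral>\<^sup>+y. f y \<partial>\<kappa> x \<partial>\<pi>)"
    by (subst (1) pi_invariant[symmetric]) (rule nn_integral_bind[OF f kappa])
  also have "\<dots> = (\<integral>\<^sup>+x. \<integral>\<^sup>+h. \<integral>\<^sup>+y. f y \<partial>kc x h \<partial>\<tau> x \<partial>\<pi>)"
  proof (intro nn_integral_cong)
    fix x assume "x \<in> space \<pi>"
    then have x[measurable]: "x \<in> space M" by (simp add: space_pi)
    have "kc x \<in> borel \<rightarrow>\<^sub>M subprob_algebra M" by measurable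
    then have "kc x \<in> \<tau> x \<rightarrow>\<^sub>M subprob_algebra M"
      using measurable_cong_sets[OF sets_tau[OF x] refl] by blast
    then show "(\<integral>\<^sup>+y. f y \<partial>\<kappa> x) = (\<integral>\<^sup>+h. \<integral>\<^sup>+y. f y \<partial>kc x h \<partial>\<tau> x)"
      using kappa_eq x by (simp add: nn_integral_bind[OF f])
  qed
  finally show ?thesis ..
qed

lemma nn_integral_after_jump_stationary:
  "(\<integral>\<^sup>+x. \<integral>\<^sup>+h. (\<integral>\<^sup>+r\<in>{0..<t}. after_jump x h r \<partial>lborel) \<partial>\<tau> x \<partial>\<pi>)
     = (\<integral>\<^sup>+x. (\<integral>\<^sup>+r\<in>{0..<t}. fresh x r \<partial>lborel) \<partial>\<pi>)"
proof -
  have "(\<integral>\<^sup>+r\<in>{0..<t}. after_jump x h r \<partial>lborel) = (\<integral>\<^sup>+y. (\<integral>\<^sup>+r\<in>{0..<t}. fresh y r \<partial>lborel) \<partial>kc x h)"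
    if x[measurable]: "x \<in> space M" for x h
  proof -
    have "(\<integral>\<^sup>+r\<in>{0..<t}. after_jump x h r \<partial>lborel)
        = (\<integral>\<^sup>+r. \<integral>\<^sup>+y. fresh y r * indicator {0..<t} r \<partial>kc x h \<partial>lborel)"
      by (intro nn_integral_cong nn_integral_multc[symmetric] borel_measurable_kc[OF x]) measurable
    also have "\<dots> = (\<integral>\<^sup>+y. (\<integral>\<^sup>+r\<in>{0..<t}. fresh y r \<partial>lborel) \<partial>kc x h)"
      by (rule nn_integral_kc_lborel_swap[OF x]) measurable
    finally show ?thesis .
  qed
  then have "(\<integral>\<^sup>+x. \<integral>\<^sup>+h. (\<integral>\<^sup>+r\<in>{0..<t}. after_jump x h r \<partial>lborel) \<partial>\<tau> x \<partial>\<pi>)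
      = (\<integral>\<^sup>+x. \<integral>\<^sup>+h. \<integral>\<^sup>+y. (\<integral>\<^sup>+r\<in>{0..<t}. fresh y r \<partial>lborel) \<partial>kc x h \<partial>\<tau> x \<partial>\<pi>)"
    by (intro nn_integral_cong) (simp add: space_pi)
  also have "\<dots> = (\<integral>\<^sup>+x. (\<integral>\<^sup>+r\<in>{0..<t}. fresh x r \<partial>lborel) \<partial>\<pi>)"
    by (rule nn_integral_stationary_hold_jump) measurable
  finally show ?thesis .
qed

(* Both sides plus the term before equal total: by stationarity, resp. by the renewal equation.
   Since fresh_law is at most 1, total \<le> t, so before can be cancelled. *)
lemma jump_part_eq_initial_part:
  assumes "0 \<le> t"
  shows "(\<integral>\<^sup>+x. \<integral>\<^sup>+h. (\<integral>\<^sup>+r\<in>{max 0 (t - h)..<t}. after_jump x h r \<partial>lborel) \<partial>\<tau> x \<partial>\<pi>)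
     = (\<integral>\<^sup>+x. \<integral>\<^sup>+h. (\<integral>\<^sup>+r\<in>{0..<min t h}. indicator A (x, r) \<partial>lborel) \<partial>\<tau> x \<partial>\<pi>)"
    (is "?jump = ?initial")
proof -
  interpret \<pi>: prob_space \<pi> by (rule prob_space_pi)
  define before where
    "before = (\<integral>\<^sup>+x. \<integral>\<^sup>+h. (\<integral>\<^sup>+r\<in>{0..<t - h}. after_jump x h r \<partial>lborel) \<partial>\<tau> x \<partial>\<pi>)"
  define total where "total = (\<integral>\<^sup>+x. (\<integral>\<^sup>+r\<in>{0..<t}. fresh x r \<partial>lborel) \<partial>\<pi>)"
  have "total = (\<integral>\<^sup>+x. \<integral>\<^sup>+h. (\<integral>\<^sup>+r\<in>{0..<t}. after_jump x h r \<partial>lborel) \<partial>\<tau> x \<partial>\<pi>)"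
    unfolding total_def by (rule nn_integral_after_jump_stationary[symmetric])
  also have "\<dots> = (\<integral>\<^sup>+x. (\<integral>\<^sup>+h. (\<integral>\<^sup>+r\<in>{0..<t - h}. after_jump x h r \<partial>lborel) \<partial>\<tau> x)
      + (\<integral>\<^sup>+h. (\<integral>\<^sup>+r\<in>{max 0 (t - h)..<t}. after_jump x h r \<partial>lborel) \<partial>\<tau> x) \<partial>\<pi>)"
    using \<open>0 \<le> t\<close>
    by (intro nn_integral_cong nn_integral_after_jump_split) (simp_all add: space_pi hold_nonneg)
  also have "\<dots> = before + ?jump"
    unfolding before_def by (rule nn_integral_add) (intro borel_measurable_pi; measurable)+
  finally have total_jump: "total = before + ?jump" .
  have "total = (\<integral>\<^sup>+x. (\<integral>\<^sup>+h. (\<integral>\<^sup>+r\<in>{0..<min t h}. indicator A (x, r) \<partial>lborel) \<partial>\<tau> x)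
      + (\<integral>\<^sup>+h. (\<integral>\<^sup>+r\<in>{0..<t - h}. after_jump x h r \<partial>lborel) \<partial>\<tau> x) \<partial>\<pi>)"
    unfolding total_def
    by (intro nn_integral_cong set_nn_integral_fresh_law) (simp_all add: space_pi hold_nonneg)
  also have "\<dots> = ?initial + before"
    unfolding before_def by (rule nn_integral_add) (intro borel_measurable_pi; measurable)+
  finally have total_initial: "total = ?initial + before" .
  have "total \<le> (\<integral>\<^sup>+x. (\<integral>\<^sup>+r\<in>{0..<t}. 1 \<partial>lborel) \<partial>\<pi>)"
    unfolding total_def
    by (intro nn_integral_mono mult_right_mono fresh_law_le_1) (simp_all add: space_pi)
  also have "\<dots> = ennreal t"
    using \<pi>.emeasure_space_1 \<open>0 \<le> t\<close> by simp
  finally have "before \<noteq> \<infinity>"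
    using total_jump by (auto simp: top_unique)
  then show ?thesis
    using total_jump total_initial by (simp add: add.commute ennreal_add_left_cancel)
qed

lemma nn_integral_survival_trans_XL_invariant:
  assumes "0 \<le> t"
  shows "(\<integral>\<^sup>+x. (\<integral>\<^sup>+l\<in>{0..}. emeasure (\<tau> x) {l<..} * trans_XL \<tau> kc t x l A \<partial>lborel) \<partial>\<pi>)
     = (\<integral>\<^sup>+x. (\<integral>\<^sup>+l\<in>{0..}. emeasure (\<tau> x) {l<..} * indicator A (x, l) \<partial>lborel) \<partial>\<pi>)"
proof -
  let ?stay = "\<lambda>x h. \<integral>\<^sup>+s\<in>{t..<h}. indicator A (x, s) \<partial>lborel"
  let ?jump = "\<lambda>x h. \<integral>\<^sup>+r\<in>{max 0 (t - h)..<t}. after_jump x h r \<partial>lborel"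
  let ?initial = "\<lambda>x h. \<integral>\<^sup>+r\<in>{0..<min t h}. indicator A (x, r) \<partial>lborel"
  have "(\<integral>\<^sup>+x. (\<integral>\<^sup>+l\<in>{0..}. emeasure (\<tau> x) {l<..} * trans_XL \<tau> kc t x l A \<partial>lborel) \<partial>\<pi>)
      = (\<integral>\<^sup>+x. (\<integral>\<^sup>+h. ?stay x h \<partial>\<tau> x) + (\<integral>\<^sup>+h. ?jump x h \<partial>\<tau> x) \<partial>\<pi>)"
    using \<open>0 \<le> t\<close>
    by (intro nn_integral_cong, subst nn_integral_survival_trans_XL, simp_all add: space_pi hold_nonneg)
       (rule nn_integral_add; intro borel_measurable_tau; measurable; simp add: space_pi)
  also have "\<dots> = (\<integral>\<^sup>+x. \<integral>\<^sup>+h. ?stay x h \<partial>\<tau> x \<partial>\<pi>) + (\<integral>\<^sup>+x. \<integral>\<^sup>+h. ?jump x h \<partial>\<tau> x \<partial>\<pi>)"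
    by (rule nn_integral_add) (intro borel_measurable_pi; measurable)+
  also have "\<dots> = (\<integral>\<^sup>+x. \<integral>\<^sup>+h. ?initial x h \<partial>\<tau> x \<partial>\<pi>) + (\<integral>\<^sup>+x. \<integral>\<^sup>+h. ?stay x h \<partial>\<tau> x \<partial>\<pi>)"
    using jump_part_eq_initial_part[OF \<open>0 \<le> t\<close>] by (simp add: add.commute)
  also have "\<dots> = (\<integral>\<^sup>+x. (\<integral>\<^sup>+h. ?initial x h \<partial>\<tau> x) + (\<integral>\<^sup>+h. ?stay x h \<partial>\<tau> x) \<partial>\<pi>)"
    by (rule nn_integral_add[symmetric]) (intro borel_measurable_pi; measurable)+
  also have "\<dots> = (\<integral>\<^sup>+x. (\<integral>\<^sup>+l\<in>{0..}. emeasure (\<tau> x) {l<..} * indicator A (x, l) \<partial>lborel) \<partial>\<pi>)"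
    using \<open>0 \<le> t\<close>
    by (intro nn_integral_cong, subst nn_integral_survival_indicator, simp_all add: space_pi hold_nonneg)
       (rule nn_integral_add[symmetric]; intro borel_measurable_tau; measurable; simp add: space_pi)
  finally show ?thesis .
qed

lemma anytime_dist_invariant:
  assumes "0 \<le> t"
  shows "(\<integral>\<^sup>+xl. trans_XL \<tau> kc t (fst xl) (snd xl) A \<partial>anytime_dist \<pi> \<tau>) = emeasure (anytime_dist \<pi> \<tau>) A"
proof -
  have "(\<lambda>xl. trans_XL \<tau> kc t (fst xl) (snd xl) A) \<in> borel_measurable (M \<Otimes>\<^sub>M borel)"
    unfolding trans_XL_def by measurable
  then show ?thesis
    by (simp add: nn_integral_anytime_dist[OF sets_pi] emeasure_anytime_dist[OF sets_pi A_sets]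
        nn_integral_survival_trans_XL_invariant[OF assms])
qed

end

theorem proposition1:
  fixes M :: "'a measure" and \<pi> :: "'a measure" and \<kappa> :: "'a \<Rightarrow> 'a measure"
    and kc :: "'a \<Rightarrow> real \<Rightarrow> 'a measure" and \<tau> :: "'a \<Rightarrow> real measure" and \<epsilon> :: real
  assumes "prob_space \<pi>" and "sets \<pi> = sets M"
    and "\<kappa> \<in> M \<rightarrow>\<^sub>M prob_algebra M"
    and "(\<lambda>(x, h). kc x h) \<in> M \<Otimes>\<^sub>M borel \<rightarrow>\<^sub>M prob_algebra M"
    and "\<tau> \<in> M \<rightarrow>\<^sub>M prob_algebra borel"
    and "\<epsilon> > 0" and "\<forall>x\<in>space M. AE h in \<tau> x. h > \<epsilon>"
    and "\<exists>C. \<forall>x\<in>space M. integrable (\<tau> x) (\<lambda>h. h) \<and> (\<integral> h. h \<partial>\<tau> x) \<le> C"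
    and "\<forall>x\<in>space M. \<kappa> x = \<tau> x \<bind> kc x"
    and "\<pi> \<bind> \<kappa> = \<pi>"
  shows "prob_space (anytime_dist \<pi> \<tau>) \<and>
    (\<forall>t\<ge>0. \<forall>A\<in>sets (M \<Otimes>\<^sub>M borel).
       (\<integral>\<^sup>+ xl. trans_XL \<tau> kc t (fst xl) (snd xl) A \<partial>anytime_dist \<pi> \<tau>)
         = emeasure (anytime_dist \<pi> \<tau>) A)"
proof -
  interpret hold_time_kernels M \<tau> kc
    using assms(4,5) by unfold_locales
  obtain C where bounded: "\<forall>x\<in>space M. integrable (\<tau> x) (\<lambda>h. h) \<and> mean_hold \<tau> x \<le> C"
    using assms(8) unfolding mean_hold_def by blast
  have hold_ge: "\<forall>x\<in>space M. AE h in \<tau> x. \<epsilon> \<le> h"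
    using assms(7) by force
  have hold_nonneg: "\<forall>x\<in>space M. AE h in \<tau> x. 0 \<le> h"
    using hold_ge assms(6) by force
  have "0 < mean_hold_total \<pi> \<tau>"
    using mean_hold_total_ge[OF assms(1,2) hold_nonneg bounded hold_ge] assms(6) by linarith
  then have "prob_space (anytime_dist \<pi> \<tau>)"
    by (rule prob_space_anytime_dist[OF assms(1,2) hold_nonneg bounded])
  moreover have "(\<integral>\<^sup>+xl. trans_XL \<tau> kc t (fst xl) (snd xl) A \<partial>anytime_dist \<pi> \<tau>)
      = emeasure (anytime_dist \<pi> \<tau>) A"
    if "0 \<le> t" and A: "A \<in> sets (M \<Otimes>\<^sub>M borel)" for t A
  proof -
    interpret renewal_event M \<tau> kc A
      by unfold_locales (fact A)
    interpret stationary_renewal M \<tau> kc A \<pi> \<kappa>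
      by (intro stationary_renewal.intro renewal_event_axioms stationary_renewal_axioms.intro)
         (fact assms hold_nonneg)+
    show ?thesis
      by (rule anytime_dist_invariant[OF \<open>0 \<le> t\<close>])
  qed
  ultimately show ?thesis by blast
qed

end
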